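(* Let $\mathbb{F}\in\{\mathbb{R},\mathbb{C}\}$, let $\nu$ be a vector norm on $\mathbb{F}^n$, and let $A\in\mathbb{F}^{n\times n}$ be nonexpansive with respect to $\nu$. Let $H=\mathcal{R}(I-A)$ and $K=\mathcal{N}(I-A)$. Suppose that $\nu(y+z)=\nu(y)+\nu(z)$ for all $y\in H$, $z\in K$. Then the following are equivalent: (i) $A$ is $l$-paracontracting with respect to $\nu$; (ii) $A$ is paracontracting with respect to $\nu$; (iii) $A$ is an $H$-contractor with respect to $\nu$.
   Context: $\mathcal{R}$ denotes range and $\mathcal{N}$ denotes nullspace. The operator norm is $\nu^0(A)=\sup_{x\neq 0}\nu(Ax)/\nu(x)$; $A$ is nonexpansive with respect to $\nu$ if $\nu^0(A)\le 1$. For a subspace $H$ invariant under $A$, $\nu^0_H(A)=\sup_{0\neq x\in H}\nu(Ax)/\nu(x)$. $A$ is paracontracting with respect to $\nu$ if $\nu(Ax)<\nu(x)$ whenever $Ax\ne x$. $A$ is $l$-paracontracting with respect to $\nu$ if there is $\gamma>0$ such that $\nu(Ax)\le \nu(x)-\gamma\,\nu(Ax-x)$ for all $x\in\mathbb{F}^n$. $A$ is an $H$-contractor with respect to $\nu$ if $A$ is nonexpansive, $H$ is invariant under $A$, and $\nu^0_H(A)<1$. *)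

theory Defs
  imports "HOL-Analysis.Analysis"
begin

definition is_vnorm :: "('f::real_normed_field ^ 'n \<Rightarrow> real) \<Rightarrow> bool" where
  "is_vnorm \<nu> \<longleftrightarrow>
     (\<forall>x. 0 \<le> \<nu> x) \<and> (\<forall>x. \<nu> x = 0 \<longleftrightarrow> x = 0) \<and>
     (\<forall>c x. \<nu> (c *s x) = norm c * \<nu> x) \<and>
     (\<forall>x y. \<nu> (x + y) \<le> \<nu> x + \<nu> y)"

text \<open>Operator norm induced by \<nu>, restricted to a subspace H (H = UNIV gives \<nu>^0).\<close>
definition op_norm_on :: "('f::real_normed_field ^ 'n \<Rightarrow> real) \<Rightarrow> (('f ^ 'n) set) \<Rightarrow> ('f ^ 'n ^ 'n) \<Rightarrow> real" where
  "op_norm_on \<nu> H A = (if H \<subseteq> {0} then 0 else (SUP x\<in>H - {0}. \<nu> (A *v x) / \<nu> x))"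

abbreviation op_norm :: "('f::real_normed_field ^ 'n \<Rightarrow> real) \<Rightarrow> ('f ^ 'n ^ 'n) \<Rightarrow> real" where
  "op_norm \<nu> A \<equiv> op_norm_on \<nu> UNIV A"

definition nonexpansive :: "('f::real_normed_field ^ 'n \<Rightarrow> real) \<Rightarrow> ('f ^ 'n ^ 'n) \<Rightarrow> bool" where
  "nonexpansive \<nu> A \<longleftrightarrow> op_norm \<nu> A \<le> 1"

definition paracontracting :: "('f::real_normed_field ^ 'n \<Rightarrow> real) \<Rightarrow> ('f ^ 'n ^ 'n) \<Rightarrow> bool" where
  "paracontracting \<nu> A \<longleftrightarrow> (\<forall>x. A *v x \<noteq> x \<longrightarrow> \<nu> (A *v x) < \<nu> x)"

definition l_paracontracting :: "('f::real_normed_field ^ 'n \<Rightarrow> real) \<Rightarrow> ('f ^ 'n ^ 'n) \<Rightarrow> bool" where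
  "l_paracontracting \<nu> A \<longleftrightarrow>
     (\<exists>\<gamma>>0. \<forall>x. \<nu> (A *v x) \<le> \<nu> x - \<gamma> * \<nu> (A *v x - x))"

definition H_contractor :: "('f::real_normed_field ^ 'n \<Rightarrow> real) \<Rightarrow> (('f ^ 'n) set) \<Rightarrow> ('f ^ 'n ^ 'n) \<Rightarrow> bool" where
  "H_contractor \<nu> H A \<longleftrightarrow>
     nonexpansive \<nu> A \<and> (\<forall>x\<in>H. A *v x \<in> H) \<and> op_norm_on \<nu> H A < 1"

definition range_IA :: "('f::real_normed_field ^ 'n ^ 'n) \<Rightarrow> ('f ^ 'n) set" where
  "range_IA A = range (\<lambda>x. x - A *v x)"

definition null_IA :: "('f::real_normed_field ^ 'n ^ 'n) \<Rightarrow> ('f ^ 'n) set" where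
  "null_IA A = {x. x - A *v x = 0}"

end

theory Submission
  imports Defs
begin

text \<open>
  The additivity of \<open>\<nu>\<close> across \<open>H\<close> and \<open>K\<close> forces
  \<open>H \<inter> K = {0}\<close>, so in finite dimension \<open>F\<^sup>n = H \<oplus> K\<close>. A paracontraction moves every nonzero
  vector of \<open>H\<close>, hence strictly shrinks it; since the ratio \<open>\<nu>(Ay)/\<nu>(y)\<close> attains its supremum on
  the compact unit sphere of \<open>H\<close>, that supremum \<open>q\<close> is \<open>< 1\<close>. Conversely, for \<open>x = y + z\<close> with
  \<open>y \<in> H\<close>, \<open>z \<in> K\<close>, additivity gives \<open>\<nu>(x) - \<nu>(Ax) = \<nu>(y) - \<nu>(Ay) \<ge> (1 - q) \<nu>(y)\<close>, while
  \<open>\<nu>(Ax - x) = \<nu>(Ay - y) \<le> (1 + q) \<nu>(y)\<close>; so \<open>\<gamma> = (1 - q)/(1 + q)\<close> witnesses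
  l-paracontraction, which in turn trivially implies paracontraction.
\<close>

lemma linear_range_kernel_decomposition:
  fixes f :: "'a::euclidean_space \<Rightarrow> 'a"
  assumes f: "linear f" and trivial: "\<And>y. y \<in> range f \<Longrightarrow> f y = 0 \<Longrightarrow> y = 0"
  obtains y z where "x = y + z" "y \<in> range f" "f z = 0"
proof -
  have sub: "subspace (range f)"
    using f linear_subspace_image subspace_UNIV by blast
  have "inj_on f (span (range f))"
    unfolding span_eq_iff[THEN iffD2, OF sub]
  proof (rule inj_onI)
    fix u v assume "u \<in> range f" "v \<in> range f" "f u = f v"
    then show "u = v"
      using trivial[of "u - v"] sub subspace_diff linear_diff[OF f] by fastforce
  qed
  then have "f ` range f = range f"
    using subspace_dim_equal[OF linear_subspace_image[OF f sub] sub] dim_image_eq[OF f] by auto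
  then obtain y where y: "y \<in> range f" "f x = f y"
    by (metis imageE rangeI)
  then have "f (x - y) = 0"
    using linear_diff[OF f] by simp
  with y show ?thesis
    using that[of y "x - y"] by simp
qed

lemma null_IA_iff: "x \<in> null_IA A \<longleftrightarrow> A *v x = x"
  by (auto simp: null_IA_def)

lemma linear_I_minus_matrix:
  fixes A :: "'f::real_normed_field ^ 'n ^ 'n"
  shows "linear (\<lambda>x. x - A *v x)"
  by (intro linear_compose_sub module_hom_ident) (simp add: bounded_linear.linear)

lemma matrix_vector_mult_scaleR_right:
  fixes A :: "'f::real_normed_field ^ 'n ^ 'm"
  shows "A *v (r *\<^sub>R x) = r *\<^sub>R (A *v x)"
  using linear_scale[of "(*v) A"] by (simp add: bounded_linear.linear)

lemma subspace_range_IA: "subspace (range_IA A)"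
  unfolding range_IA_def using linear_I_minus_matrix linear_subspace_image subspace_UNIV by blast

lemma range_IA_invariant: "x \<in> range_IA A \<Longrightarrow> A *v x \<in> range_IA A"
proof -
  assume "x \<in> range_IA A"
  then obtain u where "x = u - A *v u"
    unfolding range_IA_def by blast
  then have "A *v x = A *v u - A *v (A *v u)"
    by (simp add: matrix_vector_mult_diff_distrib)
  then show ?thesis
    unfolding range_IA_def by blast
qed

context
  fixes \<nu> :: "'f::{real_normed_field,euclidean_space} ^ 'n \<Rightarrow> real"
  assumes vnorm: "is_vnorm \<nu>"
begin

lemma vnorm_nonneg: "0 \<le> \<nu> x"
  and vnorm_eq_0_iff: "\<nu> x = 0 \<longleftrightarrow> x = 0"
  and vnorm_scale: "\<nu> (c *s x) = norm c * \<nu> x"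
  and vnorm_triangle: "\<nu> (x + y) \<le> \<nu> x + \<nu> y"
  using vnorm unfolding is_vnorm_def by auto

lemma vnorm_0 [simp]: "\<nu> 0 = 0"
  by (simp add: vnorm_eq_0_iff)

lemma vnorm_pos: "x \<noteq> 0 \<Longrightarrow> 0 < \<nu> x"
  using vnorm_nonneg vnorm_eq_0_iff by (metis order_le_less)

lemma vnorm_scaleR: "\<nu> (r *\<^sub>R x) = \<bar>r\<bar> * \<nu> x"
proof -
  have "r *\<^sub>R x = (of_real r :: 'f) *s x"
    by (simp add: vec_eq_iff of_real_def)
  then show ?thesis
    using vnorm_scale[of "of_real r" x] by simp
qed

lemma vnorm_minus: "\<nu> (- x) = \<nu> x"
  using vnorm_scaleR[of "-1" x] by simp

lemma vnorm_diff: "\<nu> (x - y) \<le> \<nu> x + \<nu> y"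
  using vnorm_triangle[of x "- y"] vnorm_minus[of y] by simp

lemma vnorm_normalize: "x \<noteq> 0 \<Longrightarrow> \<nu> x = norm x * \<nu> ((1 / norm x) *\<^sub>R x)"
  by (simp add: vnorm_scaleR)

lemma continuous_on_vnorm: "continuous_on S \<nu>"
proof -
  have "convex_on UNIV \<nu>"
  proof (rule convex_onI)
    fix x y :: "'f ^ 'n" and t :: real
    assume t: "0 < t" "t < 1"
    have "\<nu> ((1 - t) *\<^sub>R x + t *\<^sub>R y) \<le> \<nu> ((1 - t) *\<^sub>R x) + \<nu> (t *\<^sub>R y)"
      by (rule vnorm_triangle)
    also have "\<dots> = (1 - t) * \<nu> x + t * \<nu> y"
      using t by (simp add: vnorm_scaleR)
    finally show "\<nu> ((1 - t) *\<^sub>R x + t *\<^sub>R y) \<le> (1 - t) * \<nu> x + t * \<nu> y" .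
  qed simp
  then show ?thesis
    using convex_on_continuous[OF open_UNIV] continuous_on_subset by blast
qed

lemma continuous_on_vnorm_matrix: "continuous_on S (\<lambda>x. \<nu> (A *v x))"
  by (rule continuous_on_compose2[OF continuous_on_vnorm matrix_vector_mult_linear_continuous_on subset_UNIV])

lemma vnorm_lower_bound: obtains c where "0 < c" "\<And>x. c * norm x \<le> \<nu> x"
proof -
  obtain x0 where x0: "x0 \<in> sphere 0 1" and min: "\<And>y. y \<in> sphere 0 1 \<Longrightarrow> \<nu> x0 \<le> \<nu> y"
    using continuous_attains_inf[OF compact_sphere _ continuous_on_vnorm, of 0 1] by auto
  have "\<nu> x0 * norm x \<le> \<nu> x" for x
  proof (cases "x = 0")
    case False
    then have "\<nu> x0 \<le> \<nu> ((1 / norm x) *\<^sub>R x)"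
      by (intro min) simp
    then show ?thesis
      using vnorm_normalize[OF False] by (simp add: mult.commute mult_left_mono)
  qed simp
  moreover have "0 < \<nu> x0"
    using x0 by (intro vnorm_pos) auto
  ultimately show ?thesis
    using that by blast
qed

lemma bdd_above_vnorm_ratio: "bdd_above ((\<lambda>x. \<nu> (A *v x) / \<nu> x) ` S)"
proof -
  obtain c where c: "0 < c" "\<And>x. c * norm x \<le> \<nu> x"
    using vnorm_lower_bound by blast
  obtain x1 where max: "\<And>y. y \<in> sphere 0 1 \<Longrightarrow> \<nu> (A *v y) \<le> \<nu> (A *v x1)"
    using continuous_attains_sup[OF compact_sphere _ continuous_on_vnorm_matrix[of "sphere 0 1" A]]
    by force
  define M where "M = \<nu> (A *v x1) / c"
  have bound: "\<nu> (A *v x) \<le> M * \<nu> x" for x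
  proof (cases "x = 0")
    case False
    have "\<nu> (A *v x) = norm x * \<nu> (A *v ((1 / norm x) *\<^sub>R x))"
      using vnorm_normalize[of "A *v x"] False by (simp add: vnorm_scaleR matrix_vector_mult_scaleR_right)
    also have "\<dots> \<le> norm x * \<nu> (A *v x1)"
      using False by (intro mult_left_mono max) auto
    also have "\<dots> = M * (c * norm x)"
      using c by (simp add: M_def)
    also have "\<dots> \<le> M * \<nu> x"
      using c vnorm_nonneg unfolding M_def by (intro mult_left_mono) auto
    finally show ?thesis .
  qed simp
  have "\<nu> (A *v x) / \<nu> x \<le> max M 0" for x
  proof (cases "\<nu> x = 0")
    case False
    then have "\<nu> (A *v x) / \<nu> x \<le> M"
      using bound[of x] vnorm_nonneg[of x] by (simp add: divide_le_eq mult.commute)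
    then show ?thesis
      by linarith
  qed simp
  then show ?thesis
    by (rule bdd_aboveI2)
qed

lemma vnorm_le_op_norm_on: "x \<in> S \<Longrightarrow> \<nu> (A *v x) \<le> op_norm_on \<nu> S A * \<nu> x"
proof (cases "x = 0")
  case False
  assume "x \<in> S"
  with False have "\<nu> (A *v x) / \<nu> x \<le> op_norm_on \<nu> S A"
    unfolding op_norm_on_def by (auto intro!: cSUP_upper bdd_above_vnorm_ratio)
  then show ?thesis
    using vnorm_pos[OF False] by (simp add: divide_le_eq)
qed simp

lemma op_norm_on_attained:
  assumes H: "subspace H" and nontrivial: "\<not> H \<subseteq> {0}"
  obtains x where "x \<in> H" "x \<noteq> 0" "op_norm_on \<nu> H A = \<nu> (A *v x) / \<nu> x"
proof -
  define S where "S = sphere 0 1 \<inter> H"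
  have normalize_in_S: "(1 / norm y) *\<^sub>R y \<in> S" if "y \<in> H" "y \<noteq> 0" for y
    using that subspace_scale[OF H] unfolding S_def by auto
  have "compact S"
    unfolding S_def by (rule compact_Int_closed[OF compact_sphere closed_subspace[OF H]])
  moreover obtain y0 where "y0 \<in> H" "y0 \<noteq> 0"
    using nontrivial by auto
  then have "S \<noteq> {}"
    using normalize_in_S by blast
  moreover have "continuous_on S (\<lambda>x. \<nu> (A *v x) / \<nu> x)"
    by (intro continuous_on_divide continuous_on_vnorm_matrix continuous_on_vnorm)
       (auto simp: S_def vnorm_eq_0_iff)
  ultimately have "\<exists>x\<in>S. \<forall>y\<in>S. \<nu> (A *v y) / \<nu> y \<le> \<nu> (A *v x) / \<nu> x"
    by (rule continuous_attains_sup)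
  then obtain x where x: "x \<in> S"
    and max: "\<And>y. y \<in> S \<Longrightarrow> \<nu> (A *v y) / \<nu> y \<le> \<nu> (A *v x) / \<nu> x"
    by blast
  have xH: "x \<in> H" "x \<noteq> 0"
    using x unfolding S_def by auto
  have ratio_le: "\<nu> (A *v y) / \<nu> y \<le> \<nu> (A *v x) / \<nu> x" if "y \<in> H - {0}" for y
  proof -
    have "\<nu> (A *v y) / \<nu> y = \<nu> (A *v ((1 / norm y) *\<^sub>R y)) / \<nu> ((1 / norm y) *\<^sub>R y)"
      using that by (simp add: matrix_vector_mult_scaleR_right vnorm_scaleR)
    also have "\<dots> \<le> \<nu> (A *v x) / \<nu> x"
      using that by (intro max normalize_in_S) auto
    finally show ?thesis .
  qed
  have "op_norm_on \<nu> H A = (SUP y\<in>H - {0}. \<nu> (A *v y) / \<nu> y)"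
    unfolding op_norm_on_def using nontrivial by simp
  also have "\<dots> = \<nu> (A *v x) / \<nu> x"
  proof (rule antisym)
    show "(SUP y\<in>H - {0}. \<nu> (A *v y) / \<nu> y) \<le> \<nu> (A *v x) / \<nu> x"
      using nontrivial ratio_le by (intro cSUP_least) auto
    show "\<nu> (A *v x) / \<nu> x \<le> (SUP y\<in>H - {0}. \<nu> (A *v y) / \<nu> y)"
      using xH by (intro cSUP_upper bdd_above_vnorm_ratio) auto
  qed
  finally have "op_norm_on \<nu> H A = \<nu> (A *v x) / \<nu> x" .
  with xH show ?thesis
    using that by blast
qed

lemma l_paracontracting_imp_paracontracting:
  assumes "l_paracontracting \<nu> A"
  shows "paracontracting \<nu> A"
proof -
  obtain \<gamma> where \<gamma>: "\<gamma> > 0" "\<And>x. \<nu> (A *v x) \<le> \<nu> x - \<gamma> * \<nu> (A *v x - x)"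
    using assms unfolding l_paracontracting_def by blast
  have "\<nu> (A *v x) < \<nu> x" if "A *v x \<noteq> x" for x
    using \<gamma> vnorm_pos[of "A *v x - x"] that by (smt (verit) mult_pos_pos right_minus_eq)
  then show ?thesis
    unfolding paracontracting_def by blast
qed

lemma paracontracting_op_norm_on_less_1:
  assumes "paracontracting \<nu> A" and H: "subspace H"
    and no_fixed_points: "\<And>x. x \<in> H \<Longrightarrow> A *v x = x \<Longrightarrow> x = 0"
  shows "op_norm_on \<nu> H A < 1"
proof (cases "H \<subseteq> {0}")
  case False
  then obtain x where x: "x \<in> H" "x \<noteq> 0" and eq: "op_norm_on \<nu> H A = \<nu> (A *v x) / \<nu> x"
    using op_norm_on_attained[OF H] by metis
  have "\<nu> (A *v x) < \<nu> x"
    using assms(1) no_fixed_points x unfolding paracontracting_def by blast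
  then show ?thesis
    using eq vnorm_pos[OF x(2)] by (simp add: divide_less_eq)
qed (simp add: op_norm_on_def)

lemma H_contractor_imp_l_paracontracting:
  assumes contr: "H_contractor \<nu> H A"
    and decomp: "\<And>x. \<exists>y\<in>H. \<exists>z. A *v z = z \<and> x = y + z"
    and additive: "\<And>y z. y \<in> H \<Longrightarrow> A *v z = z \<Longrightarrow> \<nu> (y + z) = \<nu> y + \<nu> z"
  shows "l_paracontracting \<nu> A"
proof -
  define q where "q = max (op_norm_on \<nu> H A) 0"
  have q: "0 \<le> q" "q < 1"
    using contr unfolding H_contractor_def q_def by auto
  have contracts: "\<nu> (A *v y) \<le> q * \<nu> y" if "y \<in> H" for y
    using vnorm_le_op_norm_on[OF that, of A] vnorm_nonneg[of y] unfolding q_def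
    by (smt (verit) mult_right_mono max.cobounded1)
  define \<gamma> where "\<gamma> = (1 - q) / (1 + q)"
  have "\<nu> (A *v x) \<le> \<nu> x - \<gamma> * \<nu> (A *v x - x)" for x
  proof -
    obtain y z where y: "y \<in> H" and z: "A *v z = z" and x: "x = y + z"
      using decomp by blast
    have Ax: "A *v x = A *v y + z"
      using x z by (simp add: matrix_vector_right_distrib)
    have "A *v y \<in> H"
      using contr y unfolding H_contractor_def by blast
    then have gain: "\<nu> x - \<nu> (A *v x) = \<nu> y - \<nu> (A *v y)"
      using additive Ax x y z by simp
    have "\<nu> (A *v x - x) \<le> (1 + q) * \<nu> y"
      using Ax x vnorm_diff[of "A *v y" y] contracts[OF y] by (simp add: algebra_simps)
    then have "\<gamma> * \<nu> (A *v x - x) \<le> (1 - q) * \<nu> y"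
      using q unfolding \<gamma>_def by (simp add: divide_le_eq mult.commute)
    then show ?thesis
      using gain contracts[OF y] by (simp add: algebra_simps)
  qed
  moreover have "\<gamma> > 0"
    using q unfolding \<gamma>_def by simp
  ultimately show ?thesis
    unfolding l_paracontracting_def by blast
qed

lemma range_IA_Int_null_IA:
  assumes additive: "\<forall>y\<in>range_IA A. \<forall>z\<in>null_IA A. \<nu> (y + z) = \<nu> y + \<nu> z"
    and "y \<in> range_IA A" "A *v y = y"
  shows "y = 0"
proof -
  have "- y \<in> null_IA A"
    using assms(3) matrix_vector_mult_diff_distrib[of A 0 y] by (simp add: null_IA_iff)
  then have "\<nu> (y + - y) = \<nu> y + \<nu> (- y)"
    using additive assms(2) by blast
  then have "2 * \<nu> y = 0"
    by (simp add: vnorm_minus)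
  then show ?thesis
    by (simp add: vnorm_eq_0_iff)
qed

lemma paracontracting_equivalences:
  fixes A :: "'f ^ 'n ^ 'n"
  assumes nonexp: "nonexpansive \<nu> A"
    and additive: "\<forall>y\<in>range_IA A. \<forall>z\<in>null_IA A. \<nu> (y + z) = \<nu> y + \<nu> z"
  shows "(l_paracontracting \<nu> A \<longleftrightarrow> paracontracting \<nu> A) \<and>
         (paracontracting \<nu> A \<longleftrightarrow> H_contractor \<nu> (range_IA A) A)"
proof -
  have trivial: "y = 0" if "y \<in> range_IA A" "A *v y = y" for y
    using range_IA_Int_null_IA[OF additive that] .
  have "\<exists>y\<in>range_IA A. \<exists>z. A *v z = z \<and> x = y + z" for x
    using linear_range_kernel_decomposition[OF linear_I_minus_matrix, of A x] trivial
    unfolding range_IA_def by (metis eq_iff_diff_eq_0)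
  then have "H_contractor \<nu> (range_IA A) A \<Longrightarrow> l_paracontracting \<nu> A"
    using additive by (intro H_contractor_imp_l_paracontracting) (auto simp: null_IA_iff)
  moreover have "paracontracting \<nu> A \<Longrightarrow> H_contractor \<nu> (range_IA A) A"
    unfolding H_contractor_def
    using nonexp range_IA_invariant paracontracting_op_norm_on_less_1[OF _ subspace_range_IA] trivial
    by blast
  ultimately show ?thesis
    using l_paracontracting_imp_paracontracting by blast
qed

end

theorem theorem2p7:
  "(\<forall>(\<nu> :: real ^ 'n \<Rightarrow> real) (A :: real ^ 'n ^ 'n).
      is_vnorm \<nu> \<longrightarrow> nonexpansive \<nu> A \<longrightarrow>
      (\<forall>y\<in>range_IA A. \<forall>z\<in>null_IA A. \<nu> (y + z) = \<nu> y + \<nu> z) \<longrightarrow>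
      ((l_paracontracting \<nu> A \<longleftrightarrow> paracontracting \<nu> A) \<and>
       (paracontracting \<nu> A \<longleftrightarrow> H_contractor \<nu> (range_IA A) A)))
   \<and>
   (\<forall>(\<nu> :: complex ^ 'n \<Rightarrow> real) (A :: complex ^ 'n ^ 'n).
      is_vnorm \<nu> \<longrightarrow> nonexpansive \<nu> A \<longrightarrow>
      (\<forall>y\<in>range_IA A. \<forall>z\<in>null_IA A. \<nu> (y + z) = \<nu> y + \<nu> z) \<longrightarrow>
      ((l_paracontracting \<nu> A \<longleftrightarrow> paracontracting \<nu> A) \<and>
       (paracontracting \<nu> A \<longleftrightarrow> H_contractor \<nu> (range_IA A) A)))"
  by (rule conjI; intro allI impI; rule paracontracting_equivalences)

end
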